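(* Let $R$ be a discrete valuation ring with uniformizer $\pi$, and let $T$ be an $R$-module such that $\pi^NT=0$ for some $N\geq1$. Let $\pi_T$ be the endomorphism of $T$ given by multiplication by $\pi$, and define $m_-(T)=\sum_{n\geq0}(\mathrm{Im}\,\pi_T^n\cap\mathrm{Ker}\,\pi_T^n)$ and $m_+(T)=\bigcap_{n\geq0}(\mathrm{Im}\,\pi_T^n+\mathrm{Ker}\,\pi_T^n)$. Then $\pi\cdot m_+(T)\subset m_-(T)\subset m_+(T)$, and there are $R$-module isomorphisms $m_+(T)\simeq T/m_-(T)$ and $m_-(T)\simeq T/m_+(T)$. *)

theory Defs
  imports Complex_Main
begin

definition dvr_uniformizer :: "'a::idom \<Rightarrow> bool" where
  "dvr_uniformizer p \<longleftrightarrow> p \<noteq> 0 \<and> \<not> p dvd 1 \<and>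
     (\<forall>x. x \<noteq> 0 \<longrightarrow> (\<exists>u n. u dvd 1 \<and> x = u * p ^ n))"

definition mult_endo :: "('a \<Rightarrow> 'b \<Rightarrow> 'b) \<Rightarrow> 'a \<Rightarrow> 'b \<Rightarrow> 'b" where
  "mult_endo scale p = scale p"

definition Im_pow :: "('a \<Rightarrow> 'b \<Rightarrow> 'b) \<Rightarrow> 'a \<Rightarrow> nat \<Rightarrow> 'b set" where
  "Im_pow scale p n = range ((mult_endo scale p) ^^ n)"

definition Ker_pow :: "('a \<Rightarrow> 'b \<Rightarrow> 'b) \<Rightarrow> 'a \<Rightarrow> nat \<Rightarrow> 'b::zero set" where
  "Ker_pow scale p n = {x. ((mult_endo scale p) ^^ n) x = 0}"

definition m_minus :: "('a::comm_ring_1 \<Rightarrow> 'b::ab_group_add \<Rightarrow> 'b) \<Rightarrow> 'a \<Rightarrow> 'b set" where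
  "m_minus scale p = module.span scale (\<Union>n. Im_pow scale p n \<inter> Ker_pow scale p n)"

definition m_plus :: "('a::comm_ring_1 \<Rightarrow> 'b::ab_group_add \<Rightarrow> 'b) \<Rightarrow> 'a \<Rightarrow> 'b set" where
  "m_plus scale p = (\<Inter>n. {x + y | x y. x \<in> Im_pow scale p n \<and> y \<in> Ker_pow scale p n})"

text \<open>Quotient module T/K (K a submodule): carrier = set of cosets x + K, with
operations (x + K) + (y + K) = (x + y) + K and r (x + K) = r x + K.\<close>
definition coset :: "'b::ab_group_add \<Rightarrow> 'b set \<Rightarrow> 'b set" where
  "coset x K = (\<lambda>k. x + k) ` K"

definition quot_carrier :: "'b::ab_group_add set \<Rightarrow> 'b set set" where
  "quot_carrier K = range (\<lambda>x. coset x K)"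

definition iso_to_quotient ::
  "('a \<Rightarrow> 'b \<Rightarrow> 'b) \<Rightarrow> 'b::ab_group_add set \<Rightarrow> 'b set \<Rightarrow> bool" where
  "iso_to_quotient scale S K \<longleftrightarrow> (\<exists>g. bij_betw g S (quot_carrier K) \<and>
     (\<forall>a\<in>S. \<forall>b\<in>S. \<forall>x y. g a = coset x K \<longrightarrow> g b = coset y K \<longrightarrow> g (a + b) = coset (x + y) K) \<and>
     (\<forall>a\<in>S. \<forall>r x. g a = coset x K \<longrightarrow> g (scale r a) = coset (scale r x) K))"

end

theory Submission
  imports Defs
begin

(*
  A module T over a DVR with \<pi>^N T = 0 has a cyclic basis: a family B whose cyclic
  submodules R b \<cong> R/\<pi>^e(b) form a direct sum equal to T. It is built by induction on N:
  lift a cyclic basis of \<pi>T along \<pi>, and complete the lifts by a family of elements of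
  T[\<pi>] that is maximal (Zorn) among those independent over the span of the lifts.

  On a summand R b, Im \<pi>^n \<inter> Ker \<pi>^n = \<pi>^max(n, e-n) R b and
  Im \<pi>^n + Ker \<pi>^n = \<pi>^min(n, e-n) R b. Hence m_-(T) and m_+(T) are the images of the
  diagonal endomorphisms acting on R b by \<pi>^\<lceil>e(b)/2\<rceil> and \<pi>^\<lfloor>e(b)/2\<rfloor>. The inclusions follow
  from \<lfloor>e/2\<rfloor> \<le> \<lceil>e/2\<rceil> \<le> \<lfloor>e/2\<rfloor> + 1, and since the kernel of each of the two
  endomorphisms is the image of the other, both isomorphisms are instances of the first
  isomorphism theorem.
*)

lemma coset_kernel:
  assumes "module_hom s1 s2 h"
  shows "coset x {k. h k = 0} = {z. h z = h x}"
proof -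
  interpret module_hom s1 s2 h by (rule assms)
  have "z \<in> coset x {k. h k = 0} \<longleftrightarrow> h z = h x" for z
  proof
    assume "z \<in> coset x {k. h k = 0}"
    then show "h z = h x" unfolding coset_def by (auto simp: add)
  next
    assume "h z = h x"
    then have "z = x + (z - x)" "h (z - x) = 0" by (simp_all add: diff)
    then show "z \<in> coset x {k. h k = 0}" unfolding coset_def by blast
  qed
  then show ?thesis by blast
qed

lemma iso_to_quotient_range_kernel:
  assumes hom: "module_hom scale scale h"
  shows "iso_to_quotient scale (range h) {k. h k = 0}"
proof -
  interpret module_hom scale scale h by (rule hom)
  define g where "g a = {z. h z = a}" for a
  have g_h: "g (h x) = coset x {k. h k = 0}" for x
    unfolding g_def coset_kernel[OF hom] ..
  have h_of_g: "a = h x" if "g a = coset x {k. h k = 0}" for a x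
  proof -
    have "x \<in> g a" using that unfolding g_h[symmetric] by (simp add: g_def)
    then show ?thesis by (simp add: g_def)
  qed
  have "inj_on g (range h)"
  proof (rule inj_onI)
    fix a b assume "a \<in> range h" "g a = g b"
    then obtain x where "a = h x" "x \<in> g b" by (auto simp: g_def)
    then show "a = b" by (simp add: g_def)
  qed
  moreover have "g ` range h = quot_carrier {k. h k = 0}"
    unfolding quot_carrier_def image_image g_h ..
  ultimately have bij: "bij_betw g (range h) (quot_carrier {k. h k = 0})"
    by (rule bij_betw_imageI)
  have g_add: "g (a + b) = coset (x + y) {k. h k = 0}"
    if "g a = coset x {k. h k = 0}" "g b = coset y {k. h k = 0}" for a b x y
    using h_of_g[OF that(1)] h_of_g[OF that(2)] g_h[of "x + y"] by (simp add: add)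
  have g_scale: "g (scale r a) = coset (scale r x) {k. h k = 0}"
    if "g a = coset x {k. h k = 0}" for a r x
    using h_of_g[OF that] g_h[of "scale r x"] by (simp add: scale)
  show ?thesis
    unfolding iso_to_quotient_def
    by (intro exI[of _ g] conjI ballI allI impI bij g_add g_scale) assumption+
qed

context module
begin

lemma funpow_mult_endo: "(mult_endo scale p ^^ n) x = scale (p ^ n) x"
  by (induction n) (simp_all add: mult_endo_def mult.commute)

lemma scale_unit_eq_0_iff:
  assumes "u dvd 1"
  shows "scale u x = 0 \<longleftrightarrow> x = 0"
proof
  assume "scale u x = 0"
  obtain v where "1 = u * v" using assms by (elim dvdE)
  then have "x = scale v (scale u x)" by (metis scale_one scale_scale mult.commute)
  with \<open>scale u x = 0\<close> show "x = 0" by simp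
qed simp

end

lemma dvr_uniformizer_unit_or_dvd:
  assumes "dvr_uniformizer p"
  shows "r dvd 1 \<or> p dvd r"
proof (cases "r = 0")
  case False
  then obtain u n where "u dvd 1" "r = u * p ^ n"
    using assms unfolding dvr_uniformizer_def by blast
  then show ?thesis by (cases n) auto
qed simp

section \<open>Cyclic independence\<close>

(* The cyclic submodules R c, c \<in> C, form a direct sum that meets A only in 0. *)
definition cyclic_indep_over :: "('a \<Rightarrow> 'b \<Rightarrow> 'b) \<Rightarrow> 'b::comm_monoid_add set \<Rightarrow> 'b set \<Rightarrow> bool" where
  "cyclic_indep_over scale A C \<longleftrightarrow> (\<forall>F r. finite F \<longrightarrow> F \<subseteq> C \<longrightarrow>
     (\<Sum>b\<in>F. scale (r b) b) \<in> A \<longrightarrow> (\<forall>b\<in>F. scale (r b) b = 0))"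

abbreviation cyclic_indep :: "('a \<Rightarrow> 'b \<Rightarrow> 'b) \<Rightarrow> 'b::comm_monoid_add set \<Rightarrow> bool" where
  "cyclic_indep scale \<equiv> cyclic_indep_over scale {0}"

lemma cyclic_indep_overD:
  "cyclic_indep_over scale A C \<Longrightarrow> finite F \<Longrightarrow> F \<subseteq> C \<Longrightarrow> (\<Sum>b\<in>F. scale (r b) b) \<in> A
    \<Longrightarrow> b \<in> F \<Longrightarrow> scale (r b) b = 0"
  unfolding cyclic_indep_over_def by blast

lemma cyclic_indep_over_subset:
  "cyclic_indep_over scale A C \<Longrightarrow> C' \<subseteq> C \<Longrightarrow> cyclic_indep_over scale A C'"
  unfolding cyclic_indep_over_def by blast

lemma cyclic_indep_over_Union_chain:
  assumes "subset.chain Z Ch" and "\<And>C. C \<in> Ch \<Longrightarrow> cyclic_indep_over scale A C"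
  shows "cyclic_indep_over scale A (\<Union>Ch)"
  unfolding cyclic_indep_over_def
proof (intro allI impI)
  fix F r assume F: "finite F" "F \<subseteq> \<Union>Ch" "(\<Sum>b\<in>F. scale (r b) b) \<in> A"
  show "\<forall>b\<in>F. scale (r b) b = 0"
  proof (cases "F = {}")
    case False
    then obtain C where "C \<in> Ch" "F \<subseteq> C"
      using finite_subset_Union_chain[OF F(1,2) _ assms(1)] F(2) by blast
    then show ?thesis using F assms(2) cyclic_indep_overD by blast
  qed simp
qed

lemma cyclic_indep_imageD:
  assumes "cyclic_indep scale (f ` X)" "inj_on f X" "finite F" "F \<subseteq> X"
    and "(\<Sum>b\<in>F. scale (r b) (f b)) = 0" "b \<in> F"
  shows "scale (r b) (f b) = 0"
proof -
  define r' where "r' = r \<circ> the_inv_into X f"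
  have inj_F: "inj_on f F" using assms(2,4) by (rule inj_on_subset)
  have r'_f: "r' (f c) = r c" if "c \<in> F" for c
    unfolding r'_def using the_inv_into_f_f[OF assms(2)] that assms(4) by auto
  have "(\<Sum>y\<in>f ` F. scale (r' y) y) = (\<Sum>c\<in>F. scale (r c) (f c))"
    by (simp add: sum.reindex[OF inj_F] r'_f)
  then have "scale (r' (f b)) (f b) = 0"
    using cyclic_indep_overD[OF assms(1), of "f ` F" r' "f b"] assms(3-6) by auto
  with r'_f[OF assms(6)] show ?thesis by simp
qed

locale pi_torsion_module = module scale
  for scale :: "'a::idom \<Rightarrow> 'b::ab_group_add \<Rightarrow> 'b" +
  fixes p :: 'a and N :: nat
  assumes uniformizer: "dvr_uniformizer p"
    and scale_pow_N: "scale (p ^ N) t = 0"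
begin

lemma Im_pow_eq: "Im_pow scale p n = range (scale (p ^ n))"
  unfolding Im_pow_def funpow_mult_endo by (simp add: fun_eq_iff[symmetric])

lemma Ker_pow_eq: "Ker_pow scale p n = {x. scale (p ^ n) x = 0}"
  unfolding Ker_pow_def funpow_mult_endo ..

definition exponent :: "'b \<Rightarrow> nat" where
  "exponent x = (LEAST k. scale (p ^ k) x = 0)"

lemma scale_pow_eq_0_iff: "scale (p ^ i) x = 0 \<longleftrightarrow> exponent x \<le> i"
proof
  assume "exponent x \<le> i"
  have "scale (p ^ exponent x) x = 0"
    unfolding exponent_def by (rule LeastI[of _ N]) (rule scale_pow_N)
  then have "scale (p ^ (i - exponent x)) (scale (p ^ exponent x) x) = 0" by simp
  then show "scale (p ^ i) x = 0"
    using \<open>exponent x \<le> i\<close> by (simp add: power_add[symmetric])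
next
  assume "scale (p ^ i) x = 0"
  then show "exponent x \<le> i" unfolding exponent_def by (rule Least_le)
qed

lemma scale_pow_eq_0_of_mem_span_singleton:
  assumes "v \<in> span {b}" and "exponent b \<le> k"
  shows "scale (p ^ k) v = 0"
proof -
  obtain r where "v = scale r b" using assms(1) unfolding span_singleton by blast
  moreover have "scale (p ^ k) b = 0" using assms(2) scale_pow_eq_0_iff by simp
  ultimately show ?thesis by (metis scale_left_commute scale_zero_right)
qed

definition cyclic_pow :: "'b \<Rightarrow> nat \<Rightarrow> 'b set" where
  "cyclic_pow b j = span {scale (p ^ j) b}"

lemma cyclic_pow_0: "cyclic_pow b 0 = span {b}"
  by (simp add: cyclic_pow_def)

lemma subspace_cyclic_pow: "subspace (cyclic_pow b j)"
  by (simp add: cyclic_pow_def)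

lemma mem_cyclic_pow_iff: "v \<in> cyclic_pow b j \<longleftrightarrow> (\<exists>s. v = scale (s * p ^ j) b)"
  by (auto simp: cyclic_pow_def span_singleton)

lemma cyclic_pow_antimono:
  assumes "i \<le> j"
  shows "cyclic_pow b j \<subseteq> cyclic_pow b i"
proof
  fix v assume "v \<in> cyclic_pow b j"
  then obtain s where "v = scale (s * p ^ j) b" unfolding mem_cyclic_pow_iff by blast
  also have "s * p ^ j = (s * p ^ (j - i)) * p ^ i"
    using assms by (simp add: mult.assoc power_add[symmetric])
  finally show "v \<in> cyclic_pow b i" unfolding mem_cyclic_pow_iff by blast
qed

lemma scale_pow_mem_cyclic_pow:
  assumes "v \<in> cyclic_pow b j"
  shows "scale (p ^ i) v \<in> cyclic_pow b (i + j)"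
proof -
  obtain s where "v = scale (s * p ^ j) b" using assms unfolding mem_cyclic_pow_iff by blast
  then have "scale (p ^ i) v = scale (s * p ^ (i + j)) b"
    by (simp add: power_add mult.commute mult.left_commute)
  then show ?thesis unfolding mem_cyclic_pow_iff by blast
qed

lemma scale_pow_eq_0_iff_mem_cyclic_pow:
  assumes "v \<in> span {b}"
  shows "scale (p ^ i) v = 0 \<longleftrightarrow> v \<in> cyclic_pow b (exponent b - i)"
proof
  assume "v \<in> cyclic_pow b (exponent b - i)"
  then have "scale (p ^ i) v \<in> cyclic_pow b (i + (exponent b - i))"
    by (rule scale_pow_mem_cyclic_pow)
  moreover have "scale (p ^ (i + (exponent b - i))) b = 0"
    unfolding scale_pow_eq_0_iff by simp
  ultimately show "scale (p ^ i) v = 0"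
    unfolding cyclic_pow_def span_singleton by auto
next
  assume v: "scale (p ^ i) v = 0"
  obtain r where r: "v = scale r b" using assms unfolding span_singleton by blast
  show "v \<in> cyclic_pow b (exponent b - i)"
  proof (cases "r = 0")
    case True
    then show ?thesis using r subspace_0[OF subspace_cyclic_pow] by simp
  next
    case False
    then obtain u m where u: "u dvd 1" "r = u * p ^ m"
      using uniformizer unfolding dvr_uniformizer_def by blast
    have "scale u (scale (p ^ (m + i)) b) = 0"
      using v r u(2) by (simp add: power_add mult.commute mult.left_commute)
    then have "exponent b \<le> m + i"
      unfolding scale_unit_eq_0_iff[OF u(1)] scale_pow_eq_0_iff .
    then have "r = (u * p ^ (m - (exponent b - i))) * p ^ (exponent b - i)"
      using u(2) by (simp add: mult.assoc power_add[symmetric])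
    then show ?thesis unfolding r mem_cyclic_pow_iff by blast
  qed
qed

section \<open>Existence of a cyclic basis\<close>

lemma cyclic_indep_over_insert:
  assumes A: "subspace A" and M: "cyclic_indep_over scale A M"
    and s: "scale p s = 0" "s \<notin> span (A \<union> M)"
  shows "cyclic_indep_over scale A (insert s M)"
  unfolding cyclic_indep_over_def
proof (intro allI impI)
  fix F r assume F: "finite F" "F \<subseteq> insert s M" "(\<Sum>b\<in>F. scale (r b) b) \<in> A"
  show "\<forall>b\<in>F. scale (r b) b = 0"
  proof (cases "s \<in> F")
    case False
    then have "F \<subseteq> M" using F(2) by blast
    then show ?thesis using cyclic_indep_overD[OF M F(1) _ F(3)] by blast
  next
    case True
    define rest where "rest = (\<Sum>b\<in>F - {s}. scale (r b) b)"
    have split: "(\<Sum>b\<in>F. scale (r b) b) = scale (r s) s + rest"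
      unfolding rest_def using F(1) True by (simp add: sum.remove)
    have rest_span: "rest \<in> span (A \<union> M)"
      unfolding rest_def using F(2) by (intro span_sum span_scale span_base) blast
    have rs: "scale (r s) s = 0"
    proof (cases "p dvd r s")
      case True
      then obtain k where "r s = p * k" by (rule dvdE)
      then show ?thesis using s(1) by (metis mult.commute scale_scale scale_zero_right)
    next
      case False
      then have unit: "r s dvd 1" using dvr_uniformizer_unit_or_dvd[OF uniformizer] by blast
      then obtain v where v: "1 = r s * v" by (rule dvdE)
      have "scale (r s) s = (\<Sum>b\<in>F. scale (r b) b) - rest" using split by simp
      also have "\<dots> \<in> span (A \<union> M)"
        using F(3) by (intro span_diff[OF span_base rest_span]) blast
      finally have "scale v (scale (r s) s) \<in> span (A \<union> M)" by (rule span_scale)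
      then have "s \<in> span (A \<union> M)" using v by (metis mult.commute scale_one scale_scale)
      with s(2) show ?thesis by blast
    qed
    then have "rest \<in> A" using F(3) split by simp
    moreover have "F - {s} \<subseteq> M" using F(2) by blast
    ultimately have "\<forall>b\<in>F - {s}. scale (r b) b = 0"
      using cyclic_indep_overD[OF M finite_Diff[OF F(1)]] unfolding rest_def by blast
    then show ?thesis using rs by blast
  qed
qed

lemma exists_cyclic_complement:
  assumes "subspace A"
  obtains C where "C \<subseteq> S \<inter> {c. scale p c = 0}" "cyclic_indep_over scale A C"
    "S \<inter> {s. scale p s = 0} \<subseteq> span (A \<union> C)"
proof -
  define Z where "Z = {C. C \<subseteq> S \<inter> {c. scale p c = 0} \<and> cyclic_indep_over scale A C}"
  have chain: "\<Union>Ch \<in> Z" if ch: "subset.chain Z Ch" for Ch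
  proof -
    have "Ch \<subseteq> Z" using ch unfolding subset.chain_def by blast
    then have "cyclic_indep_over scale A (\<Union>Ch)"
      by (intro cyclic_indep_over_Union_chain[OF ch]) (auto simp: Z_def)
    with \<open>Ch \<subseteq> Z\<close> show ?thesis unfolding Z_def by blast
  qed
  obtain M where M: "M \<in> Z" and max: "\<And>X. X \<in> Z \<Longrightarrow> M \<subseteq> X \<Longrightarrow> X = M"
    using subset_Zorn'[of Z, OF chain] by blast
  have span_M: "s \<in> span (A \<union> M)" if s: "s \<in> S" "scale p s = 0" for s
  proof (rule ccontr)
    assume "s \<notin> span (A \<union> M)"
    then have "cyclic_indep_over scale A (insert s M)"
      using M cyclic_indep_over_insert[OF assms _ s(2)] unfolding Z_def by blast
    then have "insert s M \<in> Z" using M s unfolding Z_def by blast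
    then have "s \<in> M" using max by blast
    then have "s \<in> span (A \<union> M)" by (intro span_base) blast
    with \<open>s \<notin> span (A \<union> M)\<close> show False ..
  qed
  show ?thesis
  proof (rule that)
    show "M \<subseteq> S \<inter> {c. scale p c = 0}" "cyclic_indep_over scale A M"
      using M unfolding Z_def by blast+
    show "S \<inter> {s. scale p s = 0} \<subseteq> span (A \<union> M)"
      using span_M by blast
  qed
qed

lemma uniformizer_dvd_of_scale_eq_0:
  assumes "scale r x = 0" "x \<noteq> 0"
  shows "p dvd r"
proof (rule ccontr)
  assume "\<not> p dvd r"
  then have "r dvd 1" using dvr_uniformizer_unit_or_dvd[OF uniformizer] by blast
  with assms show False by (simp add: scale_unit_eq_0_iff)
qed

lemma cyclic_indep_Un_lift:
  assumes X: "cyclic_indep scale (scale p ` X)" "inj_on (scale p) X" "0 \<notin> scale p ` X"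
    and C: "\<And>c. c \<in> C \<Longrightarrow> scale p c = 0" "cyclic_indep_over scale (span X) C"
  shows "cyclic_indep scale (X \<union> C)"
  unfolding cyclic_indep_over_def
proof (intro allI impI)
  fix F r assume F: "finite F" "F \<subseteq> X \<union> C" "(\<Sum>b\<in>F. scale (r b) b) \<in> {0}"
  define FX FC where "FX = F \<inter> X" and "FC = F - X"
  have fin: "finite FX" "finite FC" and "FX \<subseteq> X" "FC \<subseteq> C"
    using F(1,2) unfolding FX_def FC_def by auto
  define sX sC where "sX = (\<Sum>b\<in>FX. scale (r b) b)" and "sC = (\<Sum>b\<in>FC. scale (r b) b)"
  have sum_0: "sX + sC = 0"
    using F(3) sum.Int_Diff[OF F(1), of "\<lambda>b. scale (r b) b" X] unfolding sX_def sC_def FX_def FC_def by simp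
  (* Multiplying by p kills the C-part, so the independence of p`X forces every coefficient
     on X into pR; then the X-part lies in span X, which kills the C-part. *)
  have "scale p sC = (\<Sum>b\<in>FC. scale (r b) (scale p b))"
    unfolding sC_def by (simp add: scale_sum_right mult.commute)
  also have "\<dots> = 0" using C(1) \<open>FC \<subseteq> C\<close> by (simp add: subset_eq)
  finally have "scale p sX = 0"
    using sum_0 by (simp add: eq_neg_iff_add_eq_0[symmetric])
  then have "(\<Sum>b\<in>FX. scale (r b) (scale p b)) = 0"
    unfolding sX_def by (simp add: scale_sum_right mult.commute)
  then have rX: "scale (r b) (scale p b) = 0" if "b \<in> FX" for b
    using cyclic_indep_imageD[OF X(1,2) fin(1) \<open>FX \<subseteq> X\<close>] that by blast
  have nz: "scale p b \<noteq> 0" if "b \<in> FX" for b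
    using X(3) \<open>FX \<subseteq> X\<close> that by (metis image_eqI subsetD)
  define s where "s b = (SOME k. r b = p * k)" for b
  have s: "r b = p * s b" if "b \<in> FX" for b
    using uniformizer_dvd_of_scale_eq_0[OF rX[OF that] nz[OF that]]
    unfolding s_def dvd_def by (rule someI_ex)
  have r_s: "scale (r b) b = scale (s b) (scale p b)" if "b \<in> FX" for b
    using s[OF that] by (simp add: mult.commute)
  have "sX \<in> span X"
    unfolding sX_def using \<open>FX \<subseteq> X\<close> by (intro span_sum span_scale span_base) blast
  then have "sC \<in> span X" using sum_0 by (metis add.inverse_unique span_neg)
  then have zero_C: "\<forall>b\<in>FC. scale (r b) b = 0"
    using cyclic_indep_overD[OF C(2) fin(2) \<open>FC \<subseteq> C\<close>] unfolding sC_def by blast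
  then have "(\<Sum>b\<in>FX. scale (s b) (scale p b)) = 0"
    using sum_0 r_s unfolding sX_def sC_def by simp
  then have "\<forall>b\<in>FX. scale (r b) b = 0"
    using cyclic_indep_imageD[OF X(1,2) fin(1) \<open>FX \<subseteq> X\<close>] r_s by simp
  with zero_C show "\<forall>b\<in>F. scale (r b) b = 0" unfolding FX_def FC_def by blast
qed

lemma span_lift:
  assumes S: "subspace S" and "X \<subseteq> S" and "scale p ` S \<subseteq> span (scale p ` X)"
    and "S \<inter> {s. scale p s = 0} \<subseteq> span (X \<union> C)"
  shows "S \<subseteq> span (X \<union> C)"
proof
  interpret scale_p: module_hom scale scale "scale p" by simp
  fix t assume t: "t \<in> S"
  have "scale p t \<in> scale p ` span X" using assms(3) t scale_p.span_image by blast
  then obtain a where a: "a \<in> span X" "scale p t = scale p a" by blast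
  have "a \<in> S" using span_minimal[OF assms(2) S] a(1) by blast
  then have "t - a \<in> S \<inter> {s. scale p s = 0}"
    using t a(2) S by (simp add: subspace_diff scale_right_diff_distrib)
  then have "t - a \<in> span (X \<union> C)" using assms(4) by blast
  moreover have "a \<in> span (X \<union> C)" using a(1) span_mono[of X "X \<union> C"] by blast
  ultimately have "(t - a) + a \<in> span (X \<union> C)" by (rule span_add)
  then show "t \<in> span (X \<union> C)" by simp
qed

lemma exists_cyclic_basis_lift:
  assumes S: "subspace S"
    and B': "B' \<subseteq> scale p ` S" "cyclic_indep scale B'" "scale p ` S \<subseteq> span B'"
  shows "\<exists>B \<subseteq> S. cyclic_indep scale B \<and> S \<subseteq> span B"
proof -
  have "B' \<subseteq> span (B' - {0})"
    using span_zero span_base[of _ "B' - {0}"] by blast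
  then have span_B': "scale p ` S \<subseteq> span (B' - {0})"
    using B'(3) span_minimal[of B' "span (B' - {0})"] by simp
  have "B' - {0} \<subseteq> scale p ` S" using B'(1) by blast
  then obtain X where X: "X \<subseteq> S" "inj_on (scale p) X" "B' - {0} = scale p ` X"
    unfolding subset_image_inj by blast
  obtain C where C: "C \<subseteq> S \<inter> {c. scale p c = 0}" "cyclic_indep_over scale (span X) C"
    "S \<inter> {s. scale p s = 0} \<subseteq> span (span X \<union> C)"
    using exists_cyclic_complement[OF subspace_span] by metis
  have "span X \<union> C \<subseteq> span (X \<union> C)"
    using span_mono[of X "X \<union> C"] span_superset[of "X \<union> C"] by blast
  then have "span (span X \<union> C) \<subseteq> span (X \<union> C)" by (simp add: span_minimal)
  have "scale p ` X \<subseteq> B'" using X(3) by blast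
  then have "cyclic_indep scale (scale p ` X)" by (rule cyclic_indep_over_subset[OF B'(2)])
  moreover have "0 \<notin> scale p ` X" using X(3) by blast
  ultimately have "cyclic_indep scale (X \<union> C)"
    using cyclic_indep_Un_lift[OF _ X(2) _ _ C(2)] C(1) by blast
  moreover have "S \<subseteq> span (X \<union> C)"
  proof (rule span_lift[OF S X(1)])
    show "scale p ` S \<subseteq> span (scale p ` X)" using span_B' X(3) by simp
    show "S \<inter> {s. scale p s = 0} \<subseteq> span (X \<union> C)"
      using C(3) \<open>span (span X \<union> C) \<subseteq> span (X \<union> C)\<close> by (rule order_trans)
  qed
  moreover have "X \<union> C \<subseteq> S" using X(1) C(1) by blast
  ultimately show ?thesis by blast
qed

lemma exists_cyclic_basis:
  assumes "subspace S" and "\<And>t. t \<in> S \<Longrightarrow> scale (p ^ n) t = 0"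
  shows "\<exists>B \<subseteq> S. cyclic_indep scale B \<and> S \<subseteq> span B"
  using assms
proof (induction n arbitrary: S)
  case 0
  then have "S \<subseteq> span {}" by auto
  moreover have "cyclic_indep scale {}" unfolding cyclic_indep_over_def by blast
  ultimately show ?case by (intro exI[of _ "{}"]) simp
next
  case (Suc n)
  interpret scale_p: module_hom scale scale "scale p" by simp
  have "subspace (scale p ` S)" using Suc.prems(1) by (rule scale_p.subspace_image)
  moreover have "scale (p ^ n) t = 0" if "t \<in> scale p ` S" for t
    using that Suc.prems(2) by (auto simp: mult.commute)
  ultimately obtain B' where "B' \<subseteq> scale p ` S" "cyclic_indep scale B'" "scale p ` S \<subseteq> span B'"
    using Suc.IH[of "scale p ` S"] by blast
  then show ?case by (rule exists_cyclic_basis_lift[OF Suc.prems(1)])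
qed

end

section \<open>Coordinates with respect to a cyclic basis\<close>

locale pi_torsion_module_with_cyclic_basis = pi_torsion_module +
  fixes B :: "'b set"
  assumes cyclic_indep_basis: "cyclic_indep scale B"
    and span_basis: "t \<in> span B"
begin

(* Coordinates are unique only modulo the annihilator of b, so all statements below are
   phrased in terms of the components scale (coord t b) b. *)
definition coord :: "'b \<Rightarrow> 'b \<Rightarrow> 'a" where
  "coord t = (SOME f. {b. f b \<noteq> 0} \<subseteq> B \<and> finite {b. f b \<noteq> 0} \<and>
     t = (\<Sum>b | f b \<noteq> 0. scale (f b) b))"

definition coord_supp :: "'b \<Rightarrow> 'b set" where
  "coord_supp t = {b. coord t b \<noteq> 0}"

definition component :: "'b \<Rightarrow> 'b \<Rightarrow> 'b" where
  "component t b = scale (coord t b) b"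

lemma finite_coord_supp: "finite (coord_supp t)"
  and coord_supp_subset: "coord_supp t \<subseteq> B"
  and sum_coord_supp: "t = (\<Sum>b\<in>coord_supp t. component t b)"
proof -
  have "\<exists>f. {b. f b \<noteq> 0} \<subseteq> B \<and> finite {b. f b \<noteq> 0} \<and> t = (\<Sum>b | f b \<noteq> 0. scale (f b) b)"
    using span_basis[of t] unfolding span_alt by blast
  then have "coord_supp t \<subseteq> B \<and> finite (coord_supp t) \<and> t = (\<Sum>b\<in>coord_supp t. component t b)"
    unfolding coord_supp_def component_def coord_def by (rule someI_ex)
  then show "finite (coord_supp t)" "coord_supp t \<subseteq> B" "t = (\<Sum>b\<in>coord_supp t. component t b)"
    by blast+
qed

lemma component_notin_coord_supp: "b \<notin> coord_supp t \<Longrightarrow> component t b = 0"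
  by (simp add: component_def coord_supp_def)

lemma component_mem_span: "component t b \<in> span {b}"
  unfolding component_def by (simp add: span_base span_scale)

lemma sum_component:
  assumes "finite G" "coord_supp t \<subseteq> G"
  shows "t = (\<Sum>b\<in>G. component t b)"
proof -
  have "(\<Sum>b\<in>G. component t b) = (\<Sum>b\<in>coord_supp t. component t b)"
    using assms component_notin_coord_supp by (intro sum.mono_neutral_right) auto
  then show ?thesis using sum_coord_supp[of t] by simp
qed

lemma component_eq:
  assumes G: "finite G" "G \<subseteq> B" and t: "t = (\<Sum>b\<in>G. scale (s b) b)"
  shows "component t b = (if b \<in> G then scale (s b) b else 0)"
proof -
  define H where "H = G \<union> coord_supp t"
  define s' where "s' b = (if b \<in> G then s b else 0)" for b
  have H: "finite H" "H \<subseteq> B" using G finite_coord_supp coord_supp_subset unfolding H_def by auto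
  have "t = (\<Sum>b\<in>H. scale (s' b) b)"
    unfolding t using H(1) by (intro sum.mono_neutral_cong_left) (auto simp: H_def s'_def)
  moreover have "t = (\<Sum>b\<in>H. scale (coord t b) b)"
    using sum_component[OF H(1)] unfolding H_def component_def by blast
  ultimately have "(\<Sum>b\<in>H. scale (s' b - coord t b) b) = 0"
    by (simp add: scale_left_diff_distrib sum_subtractf)
  then have "scale (s' c - coord t c) c = 0" if "c \<in> H" for c
    using cyclic_indep_overD[OF cyclic_indep_basis H, of "\<lambda>c. s' c - coord t c" c] that by simp
  then have eq: "scale (coord t c) c = scale (s' c) c" if "c \<in> H" for c
    using that by (simp add: scale_left_diff_distrib)
  show ?thesis
  proof (cases "b \<in> G")
    case True
    then show ?thesis using eq[of b] by (simp add: H_def s'_def component_def)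
  next
    case False
    then show ?thesis
      using eq[of b] component_notin_coord_supp[of b t]
      by (cases "b \<in> coord_supp t") (simp_all add: H_def s'_def component_def)
  qed
qed

lemma component_ext:
  assumes "\<And>b. component x b = component y b"
  shows "x = y"
proof -
  define G where "G = coord_supp x \<union> coord_supp y"
  have "finite G" using finite_coord_supp unfolding G_def by blast
  then show ?thesis
    using sum_component[of G x] sum_component[of G y] assms unfolding G_def by simp
qed

lemma component_add: "component (x + y) b = component x b + component y b"
proof -
  define G where "G = coord_supp x \<union> coord_supp y"
  have G: "finite G" "G \<subseteq> B" using finite_coord_supp coord_supp_subset unfolding G_def by auto
  have "x + y = (\<Sum>c\<in>G. scale (coord x c + coord y c) c)"
    using sum_component[OF G(1), of x] sum_component[OF G(1), of y]
    unfolding G_def component_def by (simp add: scale_left_distrib sum.distrib)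
  from component_eq[OF G this]
  have eq: "component (x + y) b = (if b \<in> G then scale (coord x b + coord y b) b else 0)" .
  show ?thesis
  proof (cases "b \<in> G")
    case True
    with eq show ?thesis by (simp add: component_def scale_left_distrib)
  next
    case False
    then have "b \<notin> coord_supp x" "b \<notin> coord_supp y" unfolding G_def by blast+
    with eq False show ?thesis by (simp add: component_notin_coord_supp)
  qed
qed

lemma component_scale: "component (scale r x) b = scale r (component x b)"
proof -
  have "scale r x = scale r (\<Sum>c\<in>coord_supp x. component x c)"
    by (rule arg_cong[OF sum_coord_supp])
  also have "\<dots> = (\<Sum>c\<in>coord_supp x. scale (r * coord x c) c)"
    by (simp add: scale_sum_right component_def)
  finally have "scale r x = (\<Sum>c\<in>coord_supp x. scale (r * coord x c) c)" .
  from component_eq[OF finite_coord_supp coord_supp_subset this]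
  have eq: "component (scale r x) b = (if b \<in> coord_supp x then scale (r * coord x b) b else 0)" .
  show ?thesis
  proof (cases "b \<in> coord_supp x")
    case True
    with eq show ?thesis by (simp add: component_def)
  next
    case False
    with eq show ?thesis by (simp add: component_notin_coord_supp)
  qed
qed

lemma component_0: "component 0 b = 0"
  using component_scale[of 0 0 b] by simp

definition diag_pow :: "('b \<Rightarrow> nat) \<Rightarrow> 'b \<Rightarrow> 'b" where
  "diag_pow j t = (\<Sum>b\<in>coord_supp t. scale (p ^ j b) (component t b))"

lemma component_diag_pow: "component (diag_pow j t) b = scale (p ^ j b) (component t b)"
proof -
  have "diag_pow j t = (\<Sum>c\<in>coord_supp t. scale (p ^ j c * coord t c) c)"
    unfolding diag_pow_def component_def by simp
  from component_eq[OF finite_coord_supp coord_supp_subset this]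
  have eq: "component (diag_pow j t) b = (if b \<in> coord_supp t then scale (p ^ j b * coord t b) b else 0)" .
  show ?thesis
  proof (cases "b \<in> coord_supp t")
    case True
    with eq show ?thesis by (simp add: component_def)
  next
    case False
    with eq show ?thesis by (simp add: component_notin_coord_supp)
  qed
qed

lemma module_hom_diag_pow: "module_hom scale scale (diag_pow j)"
proof -
  have "diag_pow j (x + y) = diag_pow j x + diag_pow j y" for x y
    by (rule component_ext) (simp add: component_diag_pow component_add scale_right_distrib)
  moreover have "diag_pow j (scale c x) = scale c (diag_pow j x)" for c x
    by (rule component_ext) (simp add: component_diag_pow component_scale mult.commute)
  ultimately show ?thesis
    unfolding module_hom_iff using module_axioms by blast
qed

lemma diag_pow_const: "diag_pow (\<lambda>_. n) = scale (p ^ n)"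
  by (rule ext, rule component_ext) (simp add: component_diag_pow component_scale)

lemma range_diag_pow_iff:
  "t \<in> range (diag_pow j) \<longleftrightarrow> (\<forall>b. component t b \<in> cyclic_pow b (j b))"
proof
  assume "t \<in> range (diag_pow j)"
  then obtain u where "t = diag_pow j u" by blast
  then show "\<forall>b. component t b \<in> cyclic_pow b (j b)"
    using scale_pow_mem_cyclic_pow[of "component u _" _ 0] component_mem_span
    by (simp add: component_diag_pow cyclic_pow_0)
next
  assume "\<forall>b. component t b \<in> cyclic_pow b (j b)"
  then have "\<forall>b. \<exists>s. component t b = scale s (scale (p ^ j b) b)"
    by (simp add: mem_cyclic_pow_iff)
  then have "\<exists>s. \<forall>b. component t b = scale (s b) (scale (p ^ j b) b)" by (rule choice)
  then obtain s where s: "\<forall>b. component t b = scale (s b) (scale (p ^ j b) b)" ..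
  define u where "u = (\<Sum>b\<in>coord_supp t. scale (s b) b)"
  have "diag_pow j u = t"
  proof (rule component_ext)
    fix b
    have u: "component u b = (if b \<in> coord_supp t then scale (s b) b else 0)"
      by (rule component_eq[OF finite_coord_supp coord_supp_subset u_def])
    show "component (diag_pow j u) b = component t b"
    proof (cases "b \<in> coord_supp t")
      case True
      then show ?thesis using u s by (simp add: component_diag_pow mult.commute)
    next
      case False
      then show ?thesis using u component_notin_coord_supp[OF False] by (simp add: component_diag_pow)
    qed
  qed
  then show "t \<in> range (diag_pow j)" by (metis rangeI)
qed

lemma diag_pow_eq_0_iff:
  "diag_pow j t = 0 \<longleftrightarrow> (\<forall>b. component t b \<in> cyclic_pow b (exponent b - j b))"
proof -
  have "diag_pow j t = 0 \<longleftrightarrow> (\<forall>b. component (diag_pow j t) b = component 0 b)"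
    by (auto intro: component_ext)
  then show ?thesis
    by (simp add: component_diag_pow component_0 scale_pow_eq_0_iff_mem_cyclic_pow[OF component_mem_span])
qed

lemma kernel_diag_pow: "{t. diag_pow j t = 0} = range (diag_pow (\<lambda>b. exponent b - j b))"
  by (simp add: set_eq_iff diag_pow_eq_0_iff range_diag_pow_iff)

section \<open>The submodules m_- and m_+ in coordinates\<close>

lemma mem_Im_pow_iff: "t \<in> Im_pow scale p n \<longleftrightarrow> (\<forall>b. component t b \<in> cyclic_pow b n)"
  unfolding Im_pow_eq diag_pow_const[symmetric] range_diag_pow_iff ..

lemma mem_Ker_pow_iff:
  "t \<in> Ker_pow scale p n \<longleftrightarrow> (\<forall>b. component t b \<in> cyclic_pow b (exponent b - n))"
  unfolding Ker_pow_eq diag_pow_const[symmetric] by (simp add: diag_pow_eq_0_iff)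

lemma subspace_range_diag_pow: "subspace (range (diag_pow j))"
  using module_hom.subspace_image[OF module_hom_diag_pow subspace_UNIV] .

lemma range_diag_pow_subset_m_minus:
  assumes "\<And>b. exponent b \<le> j b + j b"
  shows "range (diag_pow j) \<subseteq> m_minus scale p"
proof
  fix t assume "t \<in> range (diag_pow j)"
  then obtain u where t: "t = (\<Sum>b\<in>coord_supp u. scale (p ^ j b) (component u b))"
    unfolding diag_pow_def by blast
  have "scale (p ^ (j b + j b)) (component u b) = 0" for b
    using scale_pow_eq_0_of_mem_span_singleton[OF component_mem_span assms] .
  then have "scale (p ^ j b) (component u b) \<in> Im_pow scale p (j b) \<inter> Ker_pow scale p (j b)" for b
    unfolding Im_pow_eq Ker_pow_eq by (simp add: power_add)
  then show "t \<in> m_minus scale p"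
    unfolding t m_minus_def by (intro span_sum span_base) blast
qed

lemma m_minus_eq: "m_minus scale p = range (diag_pow (\<lambda>b. exponent b - exponent b div 2))"
  (is "_ = range (diag_pow ?up)")
proof
  show "m_minus scale p \<subseteq> range (diag_pow ?up)"
    unfolding m_minus_def
  proof (rule span_minimal[OF _ subspace_range_diag_pow], safe)
    fix t n assume t: "t \<in> Im_pow scale p n" "t \<in> Ker_pow scale p n"
    have "component t b \<in> cyclic_pow b (?up b)" for b
    proof (cases "?up b \<le> n")
      case True
      then show ?thesis using t(1) cyclic_pow_antimono unfolding mem_Im_pow_iff by blast
    next
      case False
      then have "?up b \<le> exponent b - n" by linarith
      then show ?thesis using t(2) cyclic_pow_antimono unfolding mem_Ker_pow_iff by blast
    qed
    then show "t \<in> range (diag_pow ?up)" unfolding range_diag_pow_iff ..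
  qed
next
  show "range (diag_pow ?up) \<subseteq> m_minus scale p"
    by (rule range_diag_pow_subset_m_minus) linarith
qed

lemma range_diag_pow_subset_Im_plus_Ker:
  assumes "\<And>b. j b < n \<Longrightarrow> exponent b \<le> n + j b"
  shows "range (diag_pow j) \<subseteq> {x + y | x y. x \<in> Im_pow scale p n \<and> y \<in> Ker_pow scale p n}"
proof
  interpret scale_pow: module_hom scale scale "scale (p ^ n)" by simp
  fix t assume "t \<in> range (diag_pow j)"
  then obtain u where t: "t = (\<Sum>b\<in>coord_supp u. scale (p ^ j b) (component u b))"
    unfolding diag_pow_def by blast
  define P where "P = {b \<in> coord_supp u. n \<le> j b}"
  have "P \<subseteq> coord_supp u" unfolding P_def by blast
  then have "t = (\<Sum>b\<in>coord_supp u - P. scale (p ^ j b) (component u b))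
      + (\<Sum>b\<in>P. scale (p ^ j b) (component u b))"
    unfolding t by (rule sum.subset_diff[OF _ finite_coord_supp])
  then have "t = (\<Sum>b\<in>P. scale (p ^ j b) (component u b))
      + (\<Sum>b\<in>coord_supp u - P. scale (p ^ j b) (component u b))"
    by (rule trans[OF _ add.commute])
  moreover have "(\<Sum>b\<in>P. scale (p ^ j b) (component u b)) \<in> range (scale (p ^ n))"
  proof (intro subspace_sum[OF scale_pow.subspace_image[OF subspace_UNIV]])
    fix b assume "b \<in> P"
    then have "p ^ j b = p ^ n * p ^ (j b - n)"
      unfolding P_def by (simp add: power_add[symmetric])
    then have eq: "scale (p ^ j b) (component u b) = scale (p ^ n) (scale (p ^ (j b - n)) (component u b))"
      by simp
    show "scale (p ^ j b) (component u b) \<in> range (scale (p ^ n))"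
      unfolding eq by (rule rangeI)
  qed
  moreover have "(\<Sum>b\<in>coord_supp u - P. scale (p ^ j b) (component u b)) \<in> {x. scale (p ^ n) x = 0}"
  proof (intro subspace_sum[OF scale_pow.subspace_kernel])
    fix b assume "b \<in> coord_supp u - P"
    then have "exponent b \<le> n + j b" using assms unfolding P_def by auto
    then have "scale (p ^ (n + j b)) (component u b) = 0"
      by (rule scale_pow_eq_0_of_mem_span_singleton[OF component_mem_span])
    then show "scale (p ^ j b) (component u b) \<in> {x. scale (p ^ n) x = 0}"
      by (simp add: power_add)
  qed
  ultimately show "t \<in> {x + y | x y. x \<in> Im_pow scale p n \<and> y \<in> Ker_pow scale p n}"
    unfolding Im_pow_eq Ker_pow_eq by blast
qed

lemma m_plus_eq: "m_plus scale p = range (diag_pow (\<lambda>b. exponent b div 2))"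
  (is "_ = range (diag_pow ?low)")
proof
  show "m_plus scale p \<subseteq> range (diag_pow ?low)"
  proof
    fix t assume t: "t \<in> m_plus scale p"
    have "component t b \<in> cyclic_pow b (?low b)" for b
    proof -
      obtain x y where xy: "t = x + y" "x \<in> Im_pow scale p (?low b)" "y \<in> Ker_pow scale p (?low b)"
        using t unfolding m_plus_def by blast
      have "component x b \<in> cyclic_pow b (?low b)" using xy(2) unfolding mem_Im_pow_iff ..
      moreover have "?low b \<le> exponent b - ?low b" by linarith
      then have "component y b \<in> cyclic_pow b (?low b)"
        using xy(3) cyclic_pow_antimono unfolding mem_Ker_pow_iff by blast
      ultimately show ?thesis
        unfolding xy(1) component_add by (rule subspace_add[OF subspace_cyclic_pow])
    qed
    then show "t \<in> range (diag_pow ?low)" unfolding range_diag_pow_iff ..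
  qed
next
  have "range (diag_pow ?low) \<subseteq> {x + y | x y. x \<in> Im_pow scale p n \<and> y \<in> Ker_pow scale p n}" for n
    by (rule range_diag_pow_subset_Im_plus_Ker) linarith
  then show "range (diag_pow ?low) \<subseteq> m_plus scale p"
    unfolding m_plus_def by blast
qed

lemma scale_m_plus_subset_m_minus: "scale p ` m_plus scale p \<subseteq> m_minus scale p"
proof
  fix z assume "z \<in> scale p ` m_plus scale p"
  then obtain t where t: "t \<in> range (diag_pow (\<lambda>b. exponent b div 2))" "z = scale p t"
    unfolding m_plus_eq by blast
  have "component z b \<in> cyclic_pow b (exponent b - exponent b div 2)" for b
  proof -
    have "component t b \<in> cyclic_pow b (exponent b div 2)"
      using t(1) unfolding range_diag_pow_iff by blast
    then have "component z b \<in> cyclic_pow b (1 + exponent b div 2)"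
      unfolding t(2) component_scale using scale_pow_mem_cyclic_pow[of _ b _ 1] by simp
    moreover have "exponent b - exponent b div 2 \<le> 1 + exponent b div 2" by linarith
    ultimately show ?thesis using cyclic_pow_antimono by blast
  qed
  then show "z \<in> m_minus scale p" unfolding m_minus_eq range_diag_pow_iff ..
qed

lemma m_minus_subset_m_plus: "m_minus scale p \<subseteq> m_plus scale p"
proof
  fix t assume "t \<in> m_minus scale p"
  then have "component t b \<in> cyclic_pow b (exponent b - exponent b div 2)" for b
    unfolding m_minus_eq range_diag_pow_iff by blast
  moreover have "cyclic_pow b (exponent b - exponent b div 2) \<subseteq> cyclic_pow b (exponent b div 2)" for b
    by (rule cyclic_pow_antimono) linarith
  ultimately show "t \<in> m_plus scale p" unfolding m_plus_eq range_diag_pow_iff by blast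
qed

lemma iso_m_plus_quotient_m_minus: "iso_to_quotient scale (m_plus scale p) (m_minus scale p)"
  using iso_to_quotient_range_kernel[OF module_hom_diag_pow, of "\<lambda>b. exponent b div 2"]
  unfolding kernel_diag_pow m_plus_eq m_minus_eq .

lemma iso_m_minus_quotient_m_plus: "iso_to_quotient scale (m_minus scale p) (m_plus scale p)"
proof -
  have "(\<lambda>b. exponent b - (exponent b - exponent b div 2)) = (\<lambda>b. exponent b div 2)" by auto
  then show ?thesis
    using iso_to_quotient_range_kernel[OF module_hom_diag_pow, of "\<lambda>b. exponent b - exponent b div 2"]
    unfolding kernel_diag_pow m_plus_eq m_minus_eq by simp
qed

end

theorem proposition1p3p3:
  fixes scale :: "'a::idom \<Rightarrow> 'b::ab_group_add \<Rightarrow> 'b"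
    and p :: 'a and N :: nat
  assumes "module scale"
    and "dvr_uniformizer p"
    and "N \<ge> 1"
    and "\<forall>t. scale (p ^ N) t = 0"
  shows "scale p ` m_plus scale p \<subseteq> m_minus scale p
    \<and> m_minus scale p \<subseteq> m_plus scale p
    \<and> iso_to_quotient scale (m_plus scale p) (m_minus scale p)
    \<and> iso_to_quotient scale (m_minus scale p) (m_plus scale p)"
proof -
  interpret pi_torsion_module scale p N
    using assms(1,2,4) by (simp add: pi_torsion_module_def pi_torsion_module_axioms_def)
  obtain B where B: "cyclic_indep scale B" "UNIV \<subseteq> span B"
    using exists_cyclic_basis[OF subspace_UNIV scale_pow_N] by blast
  interpret pi_torsion_module_with_cyclic_basis scale p N B
    using B by unfold_locales blast+
  show ?thesis
    using scale_m_plus_subset_m_minus m_minus_subset_m_plus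
      iso_m_plus_quotient_m_minus iso_m_minus_quotient_m_plus by blast
qed

end
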